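(* Let $G=(V,E)$ be a graph with arboricity $\alpha$, let $\mu$ be an orientation of its edges with out-degree at most $2\alpha$, let $h\le\log\alpha$, and consider Procedure Oriented Edge-Coloring$(G,\mu,h)$. For every $0\le i\le h$, every graph $G^{(i)}$ computed after $i$ levels of recursion, and every $v\in V$, $$\frac{\mathrm{indeg}(v)}{2^i}-1\le\mathrm{indeg}^{(i)}(v)\le\frac{\mathrm{indeg}(v)}{2^i}+1\quad\text{and}\quad\frac{\mathrm{outdeg}(v)}{2^i}-1\le\mathrm{outdeg}^{(i)}(v)\le\frac{\mathrm{outdeg}(v)}{2^i}+1,$$ where $\mathrm{indeg},\mathrm{outdeg}$ are taken in $G$ and $\mathrm{indeg}^{(i)},\mathrm{outdeg}^{(i)}$ in $G^{(i)}$, with respect to $\mu$.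
   Context: Logarithms are base 2. The arboricity of $G$ is $\max_{S\subseteq V,|S|\ge2}\lceil |E(G[S])|/(|S|-1)\rceil$. An oriented degree-splitting of $(H,\mu)$ with discrepancy $\kappa$ is a partition $(E_1,E_2)$ of $E(H)$ such that for every vertex $v$, the numbers of incoming edges of $v$ in $E_1$ and in $E_2$ differ by at most $\kappa$, and likewise for outgoing edges. Procedure Oriented Edge-Coloring$(H,\mu,h)$: if $h=0$, return a proper $(\Delta(H)+1)$-edge-coloring of $H$ from a base-case subroutine; otherwise compute an oriented degree-splitting $(E_1,E_2)$ of $(H,\mu)$ with discrepancy at most 1, recursively call Oriented Edge-Coloring$(H_1,\mu,h-1)$ and Oriented Edge-Coloring$(H_2,\mu,h-1)$ on $H_1=(V,E_1)$, $H_2=(V,E_2)$ (with the orientation induced by $\mu$), and merge the colorings using disjoint palettes. $G^{(0)}=G$, and a graph computed after $i$ levels of recursion is any $H_1$ or $H_2$ produced from a graph computed after $i-1$ levels. *)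

theory Defs
  imports Complex_Main
begin

definition simple_graph :: "'a set \<Rightarrow> 'a set set \<Rightarrow> bool" where
  "simple_graph V E \<longleftrightarrow> finite V \<and> (\<forall>e\<in>E. e \<subseteq> V \<and> card e = 2)"

definition orientation :: "'a set set \<Rightarrow> ('a set \<Rightarrow> 'a \<times> 'a) \<Rightarrow> bool" where
  "orientation E mu \<longleftrightarrow> (\<forall>e\<in>E. e = {fst (mu e), snd (mu e)})"

text \<open>Arboricity: max over S subset V with |S| >= 2 of ceil(|E(G[S])| / (|S|-1));
  taken to be 0 if V has fewer than 2 vertices (empty maximum).\<close>
definition arboricity :: "'a set \<Rightarrow> 'a set set \<Rightarrow> nat" where
  "arboricity V E = Max (insert 0
     {nat \<lceil>real (card {e\<in>E. e \<subseteq> S}) / real (card S - 1)\<rceil> | S. S \<subseteq> V \<and> card S \<ge> 2})"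

definition indeg :: "('a set \<Rightarrow> 'a \<times> 'a) \<Rightarrow> 'a set set \<Rightarrow> 'a \<Rightarrow> nat" where
  "indeg mu F v = card {e\<in>F. snd (mu e) = v}"

definition outdeg :: "('a set \<Rightarrow> 'a \<times> 'a) \<Rightarrow> 'a set set \<Rightarrow> 'a \<Rightarrow> nat" where
  "outdeg mu F v = card {e\<in>F. fst (mu e) = v}"

definition oriented_degree_splitting ::
  "'a set \<Rightarrow> ('a set \<Rightarrow> 'a \<times> 'a) \<Rightarrow> 'a set set \<Rightarrow> int \<Rightarrow> 'a set set \<Rightarrow> 'a set set \<Rightarrow> bool" where
  "oriented_degree_splitting V mu F kappa E1 E2 \<longleftrightarrow>
     E1 \<union> E2 = F \<and> E1 \<inter> E2 = {} \<and>
     (\<forall>v\<in>V. \<bar>int (indeg mu E1 v) - int (indeg mu E2 v)\<bar> \<le> kappa \<and>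
            \<bar>int (outdeg mu E1 v) - int (outdeg mu E2 v)\<bar> \<le> kappa)"

text \<open>Edge sets of graphs computed after i levels of recursion of
  Oriented Edge-Coloring(G, mu, h), started on G = (V,E); each recursive step
  uses an oriented degree-splitting with discrepancy at most 1.\<close>
inductive computed_at_level ::
  "'a set \<Rightarrow> 'a set set \<Rightarrow> ('a set \<Rightarrow> 'a \<times> 'a) \<Rightarrow> nat \<Rightarrow> 'a set set \<Rightarrow> bool"
  for V E mu where
  base: "computed_at_level V E mu 0 E"
| left: "computed_at_level V E mu i F \<Longrightarrow> oriented_degree_splitting V mu F 1 E1 E2
          \<Longrightarrow> computed_at_level V E mu (Suc i) E1"
| right: "computed_at_level V E mu i F \<Longrightarrow> oriented_degree_splitting V mu F 1 E1 E2
          \<Longrightarrow> computed_at_level V E mu (Suc i) E2"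

end

theory Submission
  imports Defs
begin

text \<open>If \<open>d = d\<^sub>1 + d\<^sub>2\<close> and \<open>\<bar>d\<^sub>1 - d\<^sub>2\<bar> \<le> 1\<close>, then \<open>d\<^sub>1\<close> is within \<open>1/2\<close> of \<open>d/2\<close>.
  So if a degree at level \<open>i\<close> is within \<open>\<epsilon>\<^sub>i\<close> of \<open>deg/2\<^sup>i\<close>, then at level \<open>i+1\<close> it is
  within \<open>\<epsilon>\<^sub>i/2 + 1/2\<close> of \<open>deg/2\<^sup>i\<^sup>+\<^sup>1\<close>; starting from \<open>\<epsilon>\<^sub>0 = 0\<close>, the error never exceeds 1.\<close>

lemma half_of_balanced_sum:
  fixes x \<epsilon> :: real and \<kappa> :: int and a b c :: nat
  assumes "a = b + c" "\<bar>real a - x\<bar> \<le> \<epsilon>" "\<bar>int b - int c\<bar> \<le> \<kappa>"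
  shows "\<bar>real b - x / 2\<bar> \<le> (\<epsilon> + \<kappa>) / 2"
proof -
  have bc: "\<bar>real b - real c\<bar> \<le> \<kappa>"
    using assms(3) by linarith
  have "real b - x / 2 = ((real a - x) + (real b - real c)) / 2"
    using assms(1) by (simp add: field_simps)
  then have "\<bar>real b - x / 2\<bar> = \<bar>(real a - x) + (real b - real c)\<bar> / 2"
    by (simp only: abs_divide abs_numeral)
  also have "\<dots> \<le> (\<bar>real a - x\<bar> + \<bar>real b - real c\<bar>) / 2"
    by (intro divide_right_mono abs_triangle_ineq) simp
  also have "\<dots> \<le> (\<epsilon> + \<kappa>) / 2"
    using assms(2) bc by simp
  finally show ?thesis .
qed

lemma indeg_Un_disjoint:
  assumes "finite E1" "finite E2" "E1 \<inter> E2 = {}"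
  shows "indeg mu (E1 \<union> E2) v = indeg mu E1 v + indeg mu E2 v"
proof -
  have "{e \<in> E1 \<union> E2. snd (mu e) = v} = {e \<in> E1. snd (mu e) = v} \<union> {e \<in> E2. snd (mu e) = v}"
    by blast
  then show ?thesis
    unfolding indeg_def using assms by (simp add: card_Un_disjoint disjoint_iff)
qed

lemma outdeg_Un_disjoint:
  assumes "finite E1" "finite E2" "E1 \<inter> E2 = {}"
  shows "outdeg mu (E1 \<union> E2) v = outdeg mu E1 v + outdeg mu E2 v"
proof -
  have "{e \<in> E1 \<union> E2. fst (mu e) = v} = {e \<in> E1. fst (mu e) = v} \<union> {e \<in> E2. fst (mu e) = v}"
    by blast
  then show ?thesis
    unfolding outdeg_def using assms by (simp add: card_Un_disjoint disjoint_iff)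
qed

lemma oriented_degree_splitting_sym:
  "oriented_degree_splitting V mu F \<kappa> E1 E2 \<Longrightarrow> oriented_degree_splitting V mu F \<kappa> E2 E1"
  unfolding oriented_degree_splitting_def by (auto simp: abs_minus_commute)

lemma oriented_degree_splitting_halves_degrees:
  assumes split: "oriented_degree_splitting V mu F \<kappa> E1 E2"
    and "finite F" "v \<in> V"
    and "\<bar>real (indeg mu F v) - x\<bar> \<le> \<epsilon>" "\<bar>real (outdeg mu F v) - y\<bar> \<le> \<epsilon>"
  shows "\<bar>real (indeg mu E1 v) - x / 2\<bar> \<le> (\<epsilon> + \<kappa>) / 2 \<and>
         \<bar>real (outdeg mu E1 v) - y / 2\<bar> \<le> (\<epsilon> + \<kappa>) / 2"
proof -
  have F: "F = E1 \<union> E2" and disj: "E1 \<inter> E2 = {}"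
    and "\<bar>int (indeg mu E1 v) - int (indeg mu E2 v)\<bar> \<le> \<kappa>"
    and "\<bar>int (outdeg mu E1 v) - int (outdeg mu E2 v)\<bar> \<le> \<kappa>"
    using split \<open>v \<in> V\<close> unfolding oriented_degree_splitting_def by auto
  moreover have "indeg mu F v = indeg mu E1 v + indeg mu E2 v"
    and "outdeg mu F v = outdeg mu E1 v + outdeg mu E2 v"
    using \<open>finite F\<close> disj unfolding F by (simp_all add: indeg_Un_disjoint outdeg_Un_disjoint)
  ultimately show ?thesis
    using half_of_balanced_sum assms(4,5) by blast
qed

lemma computed_at_level_subset:
  "computed_at_level V E mu i F \<Longrightarrow> F \<subseteq> E"
  by (induction rule: computed_at_level.induct) (auto simp: oriented_degree_splitting_def)

lemma computed_at_level_degrees: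
  assumes "computed_at_level V E mu i F" "finite E" "v \<in> V"
  shows "\<bar>real (indeg mu F v) - real (indeg mu E v) / 2 ^ i\<bar> \<le> 1 \<and>
         \<bar>real (outdeg mu F v) - real (outdeg mu E v) / 2 ^ i\<bar> \<le> 1"
  using assms(1)
proof (induction rule: computed_at_level.induct)
  case base
  then show ?case by simp
next
  case (left i F E1 E2)
  have "finite F"
    using computed_at_level_subset[OF left.hyps(1)] \<open>finite E\<close> by (rule finite_subset)
  from oriented_degree_splitting_halves_degrees[OF left.hyps(2) this \<open>v \<in> V\<close>
      left.IH[THEN conjunct1] left.IH[THEN conjunct2]]
  show ?case by (simp add: mult.commute)
next
  case (right i F E1 E2)
  have "finite F"
    using computed_at_level_subset[OF right.hyps(1)] \<open>finite E\<close> by (rule finite_subset)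
  from oriented_degree_splitting_halves_degrees[OF oriented_degree_splitting_sym[OF right.hyps(2)]
      this \<open>v \<in> V\<close> right.IH[THEN conjunct1] right.IH[THEN conjunct2]]
  show ?case by (simp add: mult.commute)
qed

theorem lemma4p8:
  fixes V :: "'a set" and E :: "'a set set" and mu :: "'a set \<Rightarrow> 'a \<times> 'a"
    and h i :: nat and F :: "'a set set" and v :: 'a
  assumes "simple_graph V E"
    and "orientation E mu"
    and "\<forall>u\<in>V. outdeg mu E u \<le> 2 * arboricity V E"
    and "real h \<le> log 2 (real (arboricity V E))"
    and "i \<le> h"
    and "computed_at_level V E mu i F"
    and "v \<in> V"
  shows "real (indeg mu E v) / 2 ^ i - 1 \<le> real (indeg mu F v) \<and>
         real (indeg mu F v) \<le> real (indeg mu E v) / 2 ^ i + 1 \<and>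
         real (outdeg mu E v) / 2 ^ i - 1 \<le> real (outdeg mu F v) \<and>
         real (outdeg mu F v) \<le> real (outdeg mu E v) / 2 ^ i + 1"
proof -
  have "E \<subseteq> Pow V" "finite V"
    using assms(1) unfolding simple_graph_def by auto
  then have "finite E"
    by (meson finite_Pow_iff finite_subset)
  from computed_at_level_degrees[OF assms(6) this assms(7)]
  show ?thesis by (simp add: abs_le_iff)
qed

end
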